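(* If $S(A)$ is an independent Stanley sequence, then $\omega(A)<\lambda(A)$ (equivalently, every element of the omitted set $O(A)$ is less than $\lambda(A)$).
   Context: A set of non-negative integers is 3-free if no three of its elements form an arithmetic progression. For a finite 3-free set $A=\{a_0<\cdots<a_k\}$ of non-negative integers, the Stanley sequence $S(A)=(a_n)_{n\ge0}$ is the increasing sequence with initial terms $a_0,\ldots,a_k$ in which each subsequent $a_{n+1}$ is the smallest integer greater than $a_n$ such that $\{a_0,\ldots,a_{n+1}\}$ is 3-free. Throughout, Stanley sequences are in root position ($a_0=0$). An integer $x$ is covered by a set $S$ if there exist $s<t$ in $S$ with $2t-s=x$. The omitted set $O(A)$ is the set of non-negative integers neither in $S(A)$ nor covered by $S(A)$; $\omega(A)$ is its largest element. A Stanley sequence $(a_n)$ is independent with character $\lambda(A)=\lambda$ if for all sufficiently large $k$: $a_{2^k+i}=a_{2^k}+a_i$ for $0\le i<2^k$, and $a_{2^k}=2a_{2^k-1}-\lambda+1$. *)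

theory Defs
  imports Main
begin

definition three_free :: "nat set \<Rightarrow> bool" where
  "three_free S \<longleftrightarrow> (\<forall>x\<in>S. \<forall>y\<in>S. \<forall>z\<in>S. x < y \<and> y < z \<longrightarrow> x + z \<noteq> 2 * y)"

text \<open>Initial segments of the Stanley sequence: stanley_prefix A n is the list
  of the first card A + n terms (the elements of A in increasing order,
  followed by n greedily chosen terms).\<close>
primrec stanley_prefix :: "nat set \<Rightarrow> nat \<Rightarrow> nat list" where
  "stanley_prefix A 0 = sorted_list_of_set A"
| "stanley_prefix A (Suc n) =
     stanley_prefix A n @
       [LEAST x. last (stanley_prefix A n) < x \<and> three_free (insert x (set (stanley_prefix A n)))]"

definition stanley :: "nat set \<Rightarrow> nat \<Rightarrow> nat" where
  "stanley A n = stanley_prefix A n ! n"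

definition covered :: "nat set \<Rightarrow> nat \<Rightarrow> bool" where
  "covered S x \<longleftrightarrow> (\<exists>s\<in>S. \<exists>t\<in>S. s < t \<and> 2 * t - s = x)"

definition omitted :: "nat set \<Rightarrow> nat set" where
  "omitted A = {x. x \<notin> range (stanley A) \<and> \<not> covered (range (stanley A)) x}"

definition independent_with_character :: "nat set \<Rightarrow> int \<Rightarrow> bool" where
  "independent_with_character A lam \<longleftrightarrow>
     (\<exists>K. \<forall>k\<ge>K.
        (\<forall>i<2^k. stanley A (2^k + i) = stanley A (2^k) + stanley A i) \<and>
        int (stanley A (2^k)) = 2 * int (stanley A (2^k - 1)) - lam + 1)"

end

theory Submission
  imports Defs
begin

text \<open>Suppose an omitted x satisfies x \<ge> \<lambda>, and pick N = 2^k so large that the block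
  identities a(N+i) = a(N) + a(i) hold for i < N and a(N-1) > 2x. The number y = a(N) + x lies
  inside the block a(N) + {a(0), ..., a(N-1)} without belonging to it, because x is not a term;
  since y exceeds the initial terms, greediness makes y = 2t - s with s < t terms. If both s, t
  lie in the block, shifting back by a(N) covers x; if t < a(N), then
  y \<le> 2a(N-1) = a(N) + \<lambda> - 1; if only t lies in the block, then a(N) \<le> x + a(N-1).
  Each alternative contradicts x \<ge> \<lambda> via the character relation a(N) = 2a(N-1) - \<lambda> + 1.\<close>

lemma sorted_le_last: "sorted xs \<Longrightarrow> x \<in> set xs \<Longrightarrow> x \<le> last xs"
  by (induction xs) auto

lemma strict_mono_gap:
  fixes f :: "nat \<Rightarrow> nat"
  assumes "strict_mono f" "f k < y" "y \<notin> range f"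
  obtains m where "k \<le> m" "f m < y" "y < f (Suc m)"
proof -
  have "\<exists>n. y < f n"
    using strict_mono_imp_increasing[OF assms(1), of "Suc y"] by (blast dest: Suc_le_lessD)
  define n where "n = (LEAST n. y < f n)"
  have "y < f n"
    unfolding n_def using \<open>\<exists>n. y < f n\<close> by (rule LeastI_ex)
  have "k < n"
  proof (rule ccontr)
    assume "\<not> k < n"
    then have "f n \<le> f k"
      using strict_mono_less_eq[OF assms(1)] by simp
    then show False
      using assms(2) \<open>y < f n\<close> by simp
  qed
  then obtain m where "n = Suc m" "k \<le> m"
    using less_iff_Suc_add by auto
  moreover have "f m < y"
  proof -
    have "\<not> y < f m"
      using not_less_Least[of m "\<lambda>n. y < f n"] \<open>n = Suc m\<close> unfolding n_def by simp
    moreover have "f m \<noteq> y"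
      using assms(3) by auto
    ultimately show ?thesis
      by simp
  qed
  ultimately show ?thesis
    using that \<open>y < f n\<close> by blast
qed

lemma covered_mono: "S \<subseteq> T \<Longrightarrow> covered S x \<Longrightarrow> covered T x"
  unfolding covered_def by blast

lemma three_free_insert_greater_iff:
  assumes "three_free S" "\<forall>z\<in>S. z < w"
  shows "three_free (insert w S) \<longleftrightarrow> \<not> covered S w"
proof
  assume tf: "three_free (insert w S)"
  show "\<not> covered S w"
  proof
    assume "covered S w"
    then obtain s t where st: "s \<in> S" "t \<in> S" "s < t" "2 * t - s = w"
      unfolding covered_def by blast
    then have "t < w" "s + w = 2 * t"
      using assms(2) by auto
    then show False
      using tf st unfolding three_free_def by blast
  qed
next
  assume "\<not> covered S w"
  then have no_ap: "s + w \<noteq> 2 * t" if "s \<in> S" "t \<in> S" "s < t" for s t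
    using that unfolding covered_def by force
  show "three_free (insert w S)"
    unfolding three_free_def
  proof (intro ballI impI)
    fix x y z
    assume "x \<in> insert w S" "y \<in> insert w S" "z \<in> insert w S" "x < y \<and> y < z"
    then consider "z = w" "x \<in> S" "y \<in> S" | "x \<in> S" "y \<in> S" "z \<in> S"
      using assms(2) by (metis insertE less_trans order_less_irrefl)
    then show "x + z \<noteq> 2 * y"
      using no_ap assms(1) \<open>x < y \<and> y < z\<close> unfolding three_free_def by cases blast+
  qed
qed

lemma length_stanley_prefix [simp]: "length (stanley_prefix A n) = card A + n"
  by (induction n) auto

lemma nth_stanley_prefix_add:
  "i < length (stanley_prefix A n) \<Longrightarrow> stanley_prefix A (n + d) ! i = stanley_prefix A n ! i"
  by (induction d) (auto simp: nth_append)

lemma independent_with_character_large_block: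
  assumes "independent_with_character A lam"
  obtains N where "M \<le> N" "\<forall>i<N. stanley A (N + i) = stanley A N + stanley A i"
    "int (stanley A N) = 2 * int (stanley A (N - 1)) - lam + 1"
proof -
  obtain K where K: "\<forall>k\<ge>K. (\<forall>i<2^k. stanley A (2^k + i) = stanley A (2^k) + stanley A i) \<and>
      int (stanley A (2^k)) = 2 * int (stanley A (2^k - 1)) - lam + 1"
    using assms unfolding independent_with_character_def by blast
  have "M \<le> 2 ^ max K M"
    using less_exp[of "max K M"] by linarith
  then show ?thesis
    using that K by auto
qed

locale stanley_seed =
  fixes A :: "nat set"
  assumes finite_A: "finite A" and nonempty_A: "A \<noteq> {}" and three_free_A: "three_free A"
begin

lemma card_pos: "0 < card A"
  using finite_A nonempty_A by (simp add: card_gt_0_iff)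

lemma nth_stanley_prefix: "i < card A + n \<Longrightarrow> stanley_prefix A n ! i = stanley A i"
  using nth_stanley_prefix_add[of i A n i] nth_stanley_prefix_add[of i A i n] card_pos
  unfolding stanley_def by (simp add: add.commute)

lemma stanley_prefix_invariant:
  "sorted_wrt (<) (stanley_prefix A n) \<and> three_free (set (stanley_prefix A n))
     \<and> stanley_prefix A n \<noteq> []"
proof (induction n)
  case 0
  then show ?case
    using finite_A nonempty_A three_free_A by simp
next
  case (Suc n)
  let ?xs = "stanley_prefix A n"
  let ?P = "\<lambda>x. last ?xs < x \<and> three_free (insert x (set ?xs))"
  have below_last: "\<forall>z\<in>set ?xs. z \<le> last ?xs"
    using Suc sorted_le_last strict_sorted_imp_sorted by blast
  have "three_free (insert (2 * last ?xs + 1) (set ?xs))"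
    using below_last Suc
    by (subst three_free_insert_greater_iff) (fastforce simp: covered_def)+
  then have "?P (2 * last ?xs + 1)"
    by simp
  then have "?P (LEAST x. ?P x)"
    by (rule LeastI)
  then show ?case
    using Suc below_last by (auto simp: sorted_wrt_append)
qed

lemma strict_mono_stanley: "strict_mono (stanley A)"
proof
  fix i j :: nat
  assume "i < j"
  then have "stanley_prefix A j ! i < stanley_prefix A j ! j"
    using stanley_prefix_invariant[of j] card_pos by (simp add: sorted_wrt_iff_nth_less)
  then show "stanley A i < stanley A j"
    using \<open>i < j\<close> card_pos by (simp add: nth_stanley_prefix)
qed

lemma set_stanley_prefix_subset: "set (stanley_prefix A n) \<subseteq> range (stanley A)"
  by (auto simp: in_set_conv_nth nth_stanley_prefix)

lemma last_stanley_prefix: "last (stanley_prefix A n) = stanley A (card A + n - 1)"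
  using stanley_prefix_invariant[of n] card_pos by (simp add: last_conv_nth nth_stanley_prefix)

lemma stanley_next:
  "stanley A (card A + n) = (LEAST x. last (stanley_prefix A n) < x
     \<and> three_free (insert x (set (stanley_prefix A n))))"
  using nth_stanley_prefix[of "card A + n" "Suc n"] by (simp add: nth_append)

lemma covered_beyond_initial:
  assumes "y \<notin> range (stanley A)" "stanley A (card A - 1) < y"
  shows "covered (range (stanley A)) y"
proof -
  obtain m where m: "card A - 1 \<le> m" "stanley A m < y" "y < stanley A (Suc m)"
    using strict_mono_gap[OF strict_mono_stanley assms(2,1)] .
  define n where "n = Suc m - card A"
  have Suc_m: "Suc m = card A + n"
    using m(1) card_pos unfolding n_def by simp
  let ?xs = "stanley_prefix A n"
  have last: "last ?xs = stanley A m"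
    using last_stanley_prefix[of n] by (simp add: Suc_m[symmetric])
  have "\<not> (last ?xs < y \<and> three_free (insert y (set ?xs)))"
    using m(3) stanley_next[of n] Suc_m not_less_Least by metis
  then have "\<not> three_free (insert y (set ?xs))"
    using m(2) last by simp
  moreover have "\<forall>z\<in>set ?xs. z < y"
    using sorted_le_last strict_sorted_imp_sorted stanley_prefix_invariant last m(2)
    by fastforce
  ultimately have "covered (set ?xs) y"
    using three_free_insert_greater_iff stanley_prefix_invariant by blast
  then show ?thesis
    using covered_mono set_stanley_prefix_subset by blast
qed

lemma stanley_block_index:
  assumes block: "\<forall>i<N. stanley A (N + i) = stanley A N + stanley A i"
    and "0 < N" "N \<le> m" "stanley A m \<le> stanley A N + stanley A (N - 1)"
  shows "m - N < N" "stanley A m = stanley A N + stanley A (m - N)"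
proof -
  have "stanley A (N + (N - 1)) = stanley A N + stanley A (N - 1)"
    using block[rule_format, of "N - 1"] \<open>0 < N\<close> by simp
  then have "stanley A m \<le> stanley A (N + (N - 1))"
    using assms(4) by linarith
  then have "m \<le> N + (N - 1)"
    using strict_mono_less_eq[OF strict_mono_stanley] by blast
  then show "m - N < N"
    using assms(2) by linarith
  then show "stanley A m = stanley A N + stanley A (m - N)"
    using block assms(3) by (metis le_add_diff_inverse)
qed

lemma shifted_not_in_stanley:
  assumes block: "\<forall>i<N. stanley A (N + i) = stanley A N + stanley A i"
    and "0 < N" "x \<notin> range (stanley A)" "x < stanley A (N - 1)"
  shows "stanley A N + x \<notin> range (stanley A)"
proof
  assume "stanley A N + x \<in> range (stanley A)"
  then obtain m where m: "stanley A m = stanley A N + x"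
    by auto
  then have "N \<le> m"
    using strict_mono_less[OF strict_mono_stanley] by (metis le_add1 not_le)
  then have "stanley A m = stanley A N + stanley A (m - N)"
    using stanley_block_index(2)[OF block \<open>0 < N\<close>] m assms(4) by simp
  then show False
    using m assms(3) by auto
qed

lemma covered_shift_cases:
  assumes block: "\<forall>i<N. stanley A (N + i) = stanley A N + stanley A i"
    and "0 < N" "x < stanley A (N - 1)"
    and "covered (range (stanley A)) (stanley A N + x)"
  shows "covered (range (stanley A)) x \<or> stanley A N + x \<le> 2 * stanley A (N - 1)
    \<or> stanley A N \<le> x + stanley A (N - 1)"
proof -
  let ?a = "stanley A"
  obtain i j where ij: "?a i < ?a j" "2 * ?a j - ?a i = ?a N + x"
    using assms(4) unfolding covered_def by auto
  have "i < j"
    using ij(1) strict_mono_less[OF strict_mono_stanley] by blast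
  have aj_le: "?a j \<le> ?a N + ?a (N - 1)"
    using ij assms(3) by linarith
  consider "j < N" | "N \<le> j" "i < N" | "N \<le> i"
    using \<open>i < j\<close> by linarith
  then show ?thesis
  proof cases
    case 1
    then have "?a j \<le> ?a (N - 1)"
      using strict_mono_less_eq[OF strict_mono_stanley] by simp
    then show ?thesis
      using ij by linarith
  next
    case 2
    have "?a j = ?a N + ?a (j - N)"
      using stanley_block_index(2)[OF block \<open>0 < N\<close> \<open>N \<le> j\<close> aj_le] .
    moreover have "?a i \<le> ?a (N - 1)"
      using \<open>i < N\<close> strict_mono_less_eq[OF strict_mono_stanley] by simp
    ultimately show ?thesis
      using ij by linarith
  next
    case 3
    have "?a j = ?a N + ?a (j - N)"
      using stanley_block_index(2)[OF block \<open>0 < N\<close> _ aj_le] \<open>i < j\<close> 3 by simp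
    moreover have "?a i = ?a N + ?a (i - N)"
      using stanley_block_index(2)[OF block \<open>0 < N\<close> 3] ij aj_le by simp
    ultimately have "?a (i - N) < ?a (j - N)" "2 * ?a (j - N) - ?a (i - N) = x"
      using ij by linarith+
    then have "covered (range ?a) x"
      unfolding covered_def by blast
    then show ?thesis
      by blast
  qed
qed

theorem omitted_less_character:
  assumes "independent_with_character A lam" "x \<in> omitted A"
  shows "int x < lam"
proof (rule ccontr)
  assume "\<not> int x < lam"
  obtain N where "2 * x + card A + 2 \<le> N"
    and block: "\<forall>i<N. stanley A (N + i) = stanley A N + stanley A i"
    and character: "int (stanley A N) = 2 * int (stanley A (N - 1)) - lam + 1"
    using independent_with_character_large_block[OF assms(1)] .
  then have "0 < N" "card A - 1 < N"
    by linarith+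
  have large: "2 * x + 1 \<le> stanley A (N - 1)"
    using strict_mono_imp_increasing[OF strict_mono_stanley, of "N - 1"]
      \<open>2 * x + card A + 2 \<le> N\<close> by linarith
  have x: "x \<notin> range (stanley A)" "\<not> covered (range (stanley A)) x"
    using assms(2) unfolding omitted_def by auto
  have "x < stanley A (N - 1)"
    using large by linarith
  have "stanley A (card A - 1) < stanley A N"
    using strict_mono_stanley \<open>card A - 1 < N\<close> by (simp add: strict_mono_less)
  then have "covered (range (stanley A)) (stanley A N + x)"
    using covered_beyond_initial shifted_not_in_stanley[OF block \<open>0 < N\<close> x(1)]
      \<open>x < stanley A (N - 1)\<close> by (meson trans_less_add1)
  then consider "covered (range (stanley A)) x"
    | "stanley A N + x \<le> 2 * stanley A (N - 1)"
    | "stanley A N \<le> x + stanley A (N - 1)"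
    using covered_shift_cases[OF block \<open>0 < N\<close> \<open>x < stanley A (N - 1)\<close>] by blast
  then show False
    using x(2) large character \<open>\<not> int x < lam\<close> by cases linarith+
qed

end

theorem mainTheorem11:
  fixes A :: "nat set" and lam :: int
  assumes "finite A" and "0 \<in> A" and "three_free A"
    and "independent_with_character A lam"
  shows "\<forall>x\<in>omitted A. int x < lam"
proof -
  interpret stanley_seed A
    using assms(1-3) by unfold_locales auto
  show ?thesis
    using omitted_less_character assms(4) by blast
qed

end
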